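(* Let $n\ge2$, $\preceq$ an admissible order on $L([0,1])$, $F\colon L([0,1])^2\to L([0,1])$, $G\colon L([0,1])^n\to L([0,1])$. The IV Sugeno-like $FG$-functional $\mathbf S_m^{F,G}$ is an $n$-dimensional IV aggregation function w.r.t. $\preceq$ for every IV fuzzy measure $m$ whenever: (i) $F(\cdot,\mathbf1)$ is non-decreasing, $F(\mathbf0,\mathbf1)=\mathbf0$, $F(\mathbf1,\mathbf1)=\mathbf1$, and $G=f\circ\mathrm{Proj}_1$ with $f\colon L([0,1])\to L([0,1])$ non-decreasing, $f(\mathbf0)=\mathbf0$, $f(\mathbf1)=\mathbf1$; or (ii) $F(\mathbf0,Y)=\mathbf0$ for all $Y\in L([0,1])$, $F(\mathbf1,\mathbf1)=\mathbf1$, $F$ is non-decreasing (in each variable), and $G=f\circ\vee$ with $f$ non-decreasing, $f(\mathbf0)=\mathbf0$, $f(\mathbf1)=\mathbf1$.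
   Context: $N=\{1,\dots,n\}$. $L([0,1])=\{[a,b]:0\le a\le b\le1\}$, $\mathbf0=[0,0]$, $\mathbf1=[1,1]$. An admissible order $\preceq$ is a total order on $L([0,1])$ with $[a,b]\preceq[c,d]$ whenever $a\le c$, $b\le d$. $\vee$ denotes maximum w.r.t. $\preceq$; monotonicity is w.r.t. $\preceq$; $\mathrm{Proj}_1(X_1,\dots,X_n)=X_1$. An $n$-dimensional IV aggregation function w.r.t. $\preceq$ is $M\colon L([0,1])^n\to L([0,1])$ with $M(\mathbf0,\dots,\mathbf0)=\mathbf0$, $M(\mathbf1,\dots,\mathbf1)=\mathbf1$, non-decreasing in each component w.r.t. $\preceq$. An IV fuzzy measure w.r.t. $\preceq$ is $m\colon2^N\to L([0,1])$, $m(\emptyset)=\mathbf0$, $m(N)=\mathbf1$, $m(A)\preceq m(B)$ for $A\subseteq B$. For a permutation $\sigma$, $E_{\sigma(i)}=\{\sigma(i),\dots,\sigma(n)\}$. $\mathbf S_m^{F,G}(X_1,\dots,X_n)=G\big(F(X_{\sigma(1)},m(E_{\sigma(1)})),\dots,F(X_{\sigma(n)},m(E_{\sigma(n)}))\big)$ with $\sigma$ any permutation such that $X_{\sigma(1)}\preceq\dots\preceq X_{\sigma(n)}$; it is defined when this value does not depend on the choice of $\sigma$ for all inputs. *)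

theory Defs
  imports Complex_Main "HOL-Combinatorics.Permutations"
begin

text \<open>Closed subintervals [a,b] of [0,1] are represented by pairs (a,b).\<close>

type_synonym iv = "real \<times> real"

definition LI :: "iv set" where
  "LI = {(a, b). 0 \<le> a \<and> a \<le> b \<and> b \<le> 1}"

definition iv0 :: iv where "iv0 = (0, 0)"
definition iv1 :: iv where "iv1 = (1, 1)"

definition admissible_order :: "(iv \<Rightarrow> iv \<Rightarrow> bool) \<Rightarrow> bool" where
  "admissible_order le \<longleftrightarrow>
     (\<forall>x\<in>LI. le x x) \<and>
     (\<forall>x\<in>LI. \<forall>y\<in>LI. le x y \<and> le y x \<longrightarrow> x = y) \<and>
     (\<forall>x\<in>LI. \<forall>y\<in>LI. \<forall>z\<in>LI. le x y \<and> le y z \<longrightarrow> le x z) \<and>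
     (\<forall>x\<in>LI. \<forall>y\<in>LI. le x y \<or> le y x) \<and>
     (\<forall>a b c d. (a, b) \<in> LI \<and> (c, d) \<in> LI \<and> a \<le> c \<and> b \<le> d \<longrightarrow> le (a, b) (c, d))"

definition inputs :: "nat \<Rightarrow> (nat \<Rightarrow> iv) set" where
  "inputs n = {1..n} \<rightarrow> LI"

definition IV_aggregation :: "(iv \<Rightarrow> iv \<Rightarrow> bool) \<Rightarrow> nat \<Rightarrow> ((nat \<Rightarrow> iv) \<Rightarrow> iv) \<Rightarrow> bool" where
  "IV_aggregation le n M \<longleftrightarrow>
     (\<forall>X\<in>inputs n. M X \<in> LI) \<and>
     M (\<lambda>_. iv0) = iv0 \<and> M (\<lambda>_. iv1) = iv1 \<and>
     (\<forall>X\<in>inputs n. \<forall>Y\<in>inputs n. (\<forall>i\<in>{1..n}. le (X i) (Y i)) \<longrightarrow> le (M X) (M Y))"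

definition IV_fuzzy_measure :: "(iv \<Rightarrow> iv \<Rightarrow> bool) \<Rightarrow> nat \<Rightarrow> (nat set \<Rightarrow> iv) \<Rightarrow> bool" where
  "IV_fuzzy_measure le n m \<longleftrightarrow>
     (\<forall>A. A \<subseteq> {1..n} \<longrightarrow> m A \<in> LI) \<and>
     m {} = iv0 \<and> m {1..n} = iv1 \<and>
     (\<forall>A B. A \<subseteq> B \<and> B \<subseteq> {1..n} \<longrightarrow> le (m A) (m B))"

definition sorting_perm :: "(iv \<Rightarrow> iv \<Rightarrow> bool) \<Rightarrow> nat \<Rightarrow> (nat \<Rightarrow> iv) \<Rightarrow> (nat \<Rightarrow> nat) \<Rightarrow> bool" where
  "sorting_perm le n X \<sigma> \<longleftrightarrow> \<sigma> permutes {1..n} \<and>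
     (\<forall>i j. 1 \<le> i \<and> i \<le> j \<and> j \<le> n \<longrightarrow> le (X (\<sigma> i)) (X (\<sigma> j)))"

text \<open>Value of the FG-functional for a given sorting permutation;
  E_{sigma(i)} = {sigma(i),...,sigma(n)} = sigma ` {i..n}.\<close>
definition S_val :: "(iv \<Rightarrow> iv \<Rightarrow> iv) \<Rightarrow> ((nat \<Rightarrow> iv) \<Rightarrow> iv) \<Rightarrow> (nat set \<Rightarrow> iv) \<Rightarrow> nat
     \<Rightarrow> (nat \<Rightarrow> iv) \<Rightarrow> (nat \<Rightarrow> nat) \<Rightarrow> iv" where
  "S_val F G m n X \<sigma> = G (\<lambda>i. F (X (\<sigma> i)) (m (\<sigma> ` {i..n})))"

definition S_well_defined :: "(iv \<Rightarrow> iv \<Rightarrow> bool) \<Rightarrow> (iv \<Rightarrow> iv \<Rightarrow> iv) \<Rightarrow> ((nat \<Rightarrow> iv) \<Rightarrow> iv)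
     \<Rightarrow> (nat set \<Rightarrow> iv) \<Rightarrow> nat \<Rightarrow> bool" where
  "S_well_defined le F G m n \<longleftrightarrow>
     (\<forall>X\<in>inputs n. \<forall>\<sigma> \<tau>. sorting_perm le n X \<sigma> \<and> sorting_perm le n X \<tau> \<longrightarrow>
        S_val F G m n X \<sigma> = S_val F G m n X \<tau>)"

definition S_FG :: "(iv \<Rightarrow> iv \<Rightarrow> bool) \<Rightarrow> (iv \<Rightarrow> iv \<Rightarrow> iv) \<Rightarrow> ((nat \<Rightarrow> iv) \<Rightarrow> iv)
     \<Rightarrow> (nat set \<Rightarrow> iv) \<Rightarrow> nat \<Rightarrow> (nat \<Rightarrow> iv) \<Rightarrow> iv" where
  "S_FG le F G m n X = S_val F G m n X (SOME \<sigma>. sorting_perm le n X \<sigma>)"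

definition iv_max :: "(iv \<Rightarrow> iv \<Rightarrow> bool) \<Rightarrow> nat \<Rightarrow> (nat \<Rightarrow> iv) \<Rightarrow> iv" where
  "iv_max le n X = (THE Z. Z \<in> X ` {1..n} \<and> (\<forall>i\<in>{1..n}. le (X i) Z))"

definition mono_iv :: "(iv \<Rightarrow> iv \<Rightarrow> bool) \<Rightarrow> (iv \<Rightarrow> iv) \<Rightarrow> bool" where
  "mono_iv le f \<longleftrightarrow> (\<forall>x\<in>LI. \<forall>y\<in>LI. le x y \<longrightarrow> le (f x) (f y))"

end

theory Submission
  imports Defs
begin

(* Only the linearity of the order on L([0,1]) is used, never its compatibility with the
  product order. The functional sees the sorting permutation sigma only through the pairs
  (X_sigma(i), m(E_sigma(i))), and in both cases sigma can be eliminated. In case (i), G reads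
  only F(X_sigma(1), m(N)) = F(min X, 1). In case (ii),
  max_i F(X_sigma(i), m(E_sigma(i))) = max_j F(X_j, m{k. X_j <= X_k}), because E_sigma(i) lies
  inside the upper set of X_sigma(i), with equality at the first occurrence of each value, and F
  is monotone in its second argument. Both sigma-free forms are monotone in X, and composing
  with f keeps the boundary values. *)

lemma inputs_iff: "X \<in> inputs n \<longleftrightarrow> (\<forall>i\<in>{1..n}. X i \<in> LI)"
  by (auto simp: inputs_def)

lemma inputsD: "X \<in> inputs n \<Longrightarrow> i \<in> {1..n} \<Longrightarrow> X i \<in> LI"
  by (simp add: inputs_iff)

lemma const_in_inputs: "c \<in> LI \<Longrightarrow> (\<lambda>_. c) \<in> inputs n"
  by (simp add: inputs_iff)

lemma iv0_in_LI: "iv0 \<in> LI" and iv1_in_LI: "iv1 \<in> LI"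
  by (auto simp: LI_def iv0_def iv1_def)

lemma mono_ivD: "mono_iv le f \<Longrightarrow> x \<in> LI \<Longrightarrow> y \<in> LI \<Longrightarrow> le x y \<Longrightarrow> le (f x) (f y)"
  unfolding mono_iv_def by blast

lemma mono_iv_comp:
  "mono_iv le f \<Longrightarrow> mono_iv le g \<Longrightarrow> \<forall>x\<in>LI. g x \<in> LI \<Longrightarrow> mono_iv le (\<lambda>x. f (g x))"
  unfolding mono_iv_def by blast

lemma fuzzy_measure_in_LI: "IV_fuzzy_measure le n m \<Longrightarrow> A \<subseteq> {1..n} \<Longrightarrow> m A \<in> LI"
  unfolding IV_fuzzy_measure_def by blast

lemma fuzzy_measure_mono:
  "IV_fuzzy_measure le n m \<Longrightarrow> A \<subseteq> B \<Longrightarrow> B \<subseteq> {1..n} \<Longrightarrow> le (m A) (m B)"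
  unfolding IV_fuzzy_measure_def by blast

lemma fuzzy_measure_top: "IV_fuzzy_measure le n m \<Longrightarrow> m {1..n} = iv1"
  unfolding IV_fuzzy_measure_def by blast

lemma sorting_perm_permutes: "sorting_perm le n X \<sigma> \<Longrightarrow> \<sigma> permutes {1..n}"
  unfolding sorting_perm_def by blast

lemma sorting_perm_sorted:
  "sorting_perm le n X \<sigma> \<Longrightarrow> 1 \<le> i \<Longrightarrow> i \<le> j \<Longrightarrow> j \<le> n \<Longrightarrow> le (X (\<sigma> i)) (X (\<sigma> j))"
  unfolding sorting_perm_def by blast

lemma sorting_perm_in_range:
  "sorting_perm le n X \<sigma> \<Longrightarrow> i \<in> {1..n} \<Longrightarrow> \<sigma> i \<in> {1..n}"
  by (metis permutes_in_image sorting_perm_permutes)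

lemma sorting_perm_preimage:
  assumes "sorting_perm le n X \<sigma>" "j \<in> {1..n}"
  obtains p where "p \<in> {1..n}" "\<sigma> p = j"
proof -
  have \<sigma>: "\<sigma> permutes {1..n}"
    using sorting_perm_permutes[OF assms(1)] .
  show thesis
    using that[of "inv \<sigma> j"] permutes_inverses(1)[OF \<sigma>] permutes_in_image[OF permutes_inv[OF \<sigma>]]
      assms(2) by simp
qed

lemma sorting_perm_first_occurrence:
  assumes "sorting_perm le n X \<sigma>" "j \<in> {1..n}"
  obtains i where "i \<in> {1..n}" "X (\<sigma> i) = X j" "\<forall>p\<in>{1..<i}. X (\<sigma> p) \<noteq> X j"
proof -
  let ?P = "\<lambda>p. p \<in> {1..n} \<and> X (\<sigma> p) = X j"
  define i where "i = (LEAST p. ?P p)"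
  obtain p where "?P p"
    using sorting_perm_preimage[OF assms] by blast
  then have i: "?P i"
    unfolding i_def by (rule LeastI)
  have "\<not> ?P p" if "p < i" for p
    using that unfolding i_def by (rule not_less_Least)
  then have "\<forall>p\<in>{1..<i}. X (\<sigma> p) \<noteq> X j"
    using i by simp
  then show thesis
    using that i by blast
qed

lemma sorting_perm_first_least:
  assumes "sorting_perm le n X \<sigma>" "j \<in> {1..n}"
  shows "le (X (\<sigma> 1)) (X j)"
proof -
  obtain p where "p \<in> {1..n}" "\<sigma> p = j"
    using sorting_perm_preimage[OF assms] .
  then show ?thesis
    using sorting_perm_sorted[OF assms(1), of 1 p] by simp
qed

lemma sorted_values_in_inputs:
  assumes "X \<in> inputs n" "\<sigma> permutes {1..n}" "IV_fuzzy_measure le n m"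
    and F_range: "\<forall>x\<in>LI. \<forall>y\<in>LI. F x y \<in> LI"
  shows "(\<lambda>i. F (X (\<sigma> i)) (m (\<sigma> ` {i..n}))) \<in> inputs n"
proof -
  have "F (X (\<sigma> i)) (m (\<sigma> ` {i..n})) \<in> LI" if "i \<in> {1..n}" for i
  proof -
    have "\<sigma> i \<in> {1..n}" "\<sigma> ` {i..n} \<subseteq> {1..n}"
      using permutes_in_image[OF assms(2)] permutes_image[OF assms(2)] that by auto
    then show ?thesis
      using F_range inputsD[OF assms(1)] fuzzy_measure_in_LI[OF assms(3)] by blast
  qed
  then show ?thesis
    by (simp add: inputs_iff)
qed

lemma IV_aggregation_comp:
  assumes "IV_aggregation le n \<Psi>"
    and "\<forall>x\<in>LI. g x \<in> LI" "mono_iv le g" "g iv0 = iv0" "g iv1 = iv1"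
  shows "IV_aggregation le n (\<lambda>X. g (\<Psi> X))"
  unfolding IV_aggregation_def
proof (intro conjI ballI impI)
  fix X Y assume "X \<in> inputs n" "Y \<in> inputs n" "\<forall>i\<in>{1..n}. le (X i) (Y i)"
  then show "le (g (\<Psi> X)) (g (\<Psi> Y))"
    using assms mono_ivD unfolding IV_aggregation_def by metis
qed (use assms in \<open>simp_all add: IV_aggregation_def\<close>)

lemma IV_aggregation_cong:
  assumes "\<forall>X\<in>inputs n. M X = M' X" "IV_aggregation le n M'"
  shows "IV_aggregation le n M"
proof -
  have "M (\<lambda>_. iv0) = M' (\<lambda>_. iv0)" "M (\<lambda>_. iv1) = M' (\<lambda>_. iv1)"
    using assms(1) const_in_inputs iv0_in_LI iv1_in_LI by blast+
  then show ?thesis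
    using assms unfolding IV_aggregation_def by simp
qed

locale iv_linorder =
  fixes le :: "iv \<Rightarrow> iv \<Rightarrow> bool" (infix \<open>\<preceq>\<close> 50)
  assumes refl_LI: "x \<in> LI \<Longrightarrow> x \<preceq> x"
    and antisym_LI: "x \<in> LI \<Longrightarrow> y \<in> LI \<Longrightarrow> x \<preceq> y \<Longrightarrow> y \<preceq> x \<Longrightarrow> x = y"
    and trans_LI: "x \<in> LI \<Longrightarrow> y \<in> LI \<Longrightarrow> z \<in> LI \<Longrightarrow> x \<preceq> y \<Longrightarrow> y \<preceq> z \<Longrightarrow> x \<preceq> z"
    and total_LI: "x \<in> LI \<Longrightarrow> y \<in> LI \<Longrightarrow> x \<preceq> y \<or> y \<preceq> x"

lemma admissible_order_imp_iv_linorder: "admissible_order le \<Longrightarrow> iv_linorder le"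
  unfolding admissible_order_def by unfold_locales blast+

context iv_linorder
begin

lemma dual: "iv_linorder (\<lambda>x y. y \<preceq> x)"
  by unfold_locales (fact refl_LI, metis antisym_LI, metis trans_LI, metis total_LI)

lemma finite_has_greatest:
  assumes "finite S" "S \<noteq> {}" "S \<subseteq> LI"
  shows "\<exists>a\<in>S. \<forall>b\<in>S. b \<preceq> a"
proof -
  have "transp_on S (\<preceq>)"
  proof (rule transp_onI)
    fix x y z assume "x \<in> S" "y \<in> S" "z \<in> S" "x \<preceq> y" "y \<preceq> z"
    then show "x \<preceq> z"
      using trans_LI[of x y z] assms(3) by blast
  qed
  moreover have "totalp_on S (\<preceq>)"
    unfolding totalp_on_def using assms(3) total_LI by blast
  ultimately obtain a where "a \<in> S" "\<forall>b\<in>S. b \<noteq> a \<longrightarrow> b \<preceq> a"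
    using Finite_Set.bex_greatest_element[OF assms(1,2)] by metis
  then show ?thesis
    using assms(3) refl_LI by (metis subsetD)
qed

lemma finite_has_least:
  "finite S \<Longrightarrow> S \<noteq> {} \<Longrightarrow> S \<subseteq> LI \<Longrightarrow> \<exists>a\<in>S. \<forall>b\<in>S. a \<preceq> b"
  using iv_linorder.finite_has_greatest[OF dual] .

lemma iv_max_eqI:
  assumes "X \<in> inputs n" "j \<in> {1..n}" "\<forall>i\<in>{1..n}. X i \<preceq> X j"
  shows "iv_max (\<preceq>) n X = X j"
  unfolding iv_max_def
proof (rule the_equality)
  show "X j \<in> X ` {1..n} \<and> (\<forall>i\<in>{1..n}. X i \<preceq> X j)"
    using assms by blast
  fix Z assume Z: "Z \<in> X ` {1..n} \<and> (\<forall>i\<in>{1..n}. X i \<preceq> Z)"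
  then obtain k where "k \<in> {1..n}" "Z = X k"
    by blast
  then show "Z = X j"
    using antisym_LI[of Z "X j"] inputsD[OF assms(1)] assms(2,3) Z by simp
qed

lemma iv_max_attained:
  assumes "X \<in> inputs n" "n \<ge> 1"
  obtains j where "j \<in> {1..n}" "iv_max (\<preceq>) n X = X j" "\<forall>i\<in>{1..n}. X i \<preceq> X j"
proof -
  have "X ` {1..n} \<noteq> {}" "X ` {1..n} \<subseteq> LI"
    using assms by (auto simp: inputs_iff)
  then obtain j where "j \<in> {1..n}" "\<forall>i\<in>{1..n}. X i \<preceq> X j"
    using finite_has_greatest[of "X ` {1..n}"] by auto
  then show thesis
    using that iv_max_eqI[OF assms(1)] by blast
qed

lemma iv_max_in_LI: "X \<in> inputs n \<Longrightarrow> n \<ge> 1 \<Longrightarrow> iv_max (\<preceq>) n X \<in> LI"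
  by (metis iv_max_attained inputsD)

lemma iv_max_upper:
  assumes "X \<in> inputs n" "i \<in> {1..n}"
  shows "X i \<preceq> iv_max (\<preceq>) n X"
proof -
  have "n \<ge> 1"
    using assms(2) by simp
  then show ?thesis
    using iv_max_attained[OF assms(1)] assms(2) by metis
qed

lemma iv_max_const: "c \<in> LI \<Longrightarrow> n \<ge> 1 \<Longrightarrow> iv_max (\<preceq>) n (\<lambda>_. c) = c"
  using iv_max_eqI[OF const_in_inputs, of c 1 n] refl_LI by simp

lemma iv_max_mono:
  assumes Z: "Z \<in> inputs n" and W: "W \<in> inputs n" and "n \<ge> 1"
    and dominated: "\<forall>i\<in>{1..n}. \<exists>j\<in>{1..n}. Z i \<preceq> W j"
  shows "iv_max (\<preceq>) n Z \<preceq> iv_max (\<preceq>) n W"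
proof -
  obtain i where i: "i \<in> {1..n}" "iv_max (\<preceq>) n Z = Z i"
    using iv_max_attained[OF Z \<open>n \<ge> 1\<close>] by blast
  obtain j where j: "j \<in> {1..n}" "Z i \<preceq> W j"
    using dominated i(1) by blast
  show ?thesis
    unfolding i(2)
    using trans_LI[OF _ _ _ j(2) iv_max_upper[OF W j(1)]] i(1) j(1) Z W iv_max_in_LI[OF W \<open>n \<ge> 1\<close>]
    by (simp add: inputsD)
qed

lemma iv_max_eq:
  assumes "Z \<in> inputs n" "W \<in> inputs n" "n \<ge> 1"
    and "\<forall>i\<in>{1..n}. \<exists>j\<in>{1..n}. Z i \<preceq> W j" "\<forall>j\<in>{1..n}. \<exists>i\<in>{1..n}. W j \<preceq> Z i"
  shows "iv_max (\<preceq>) n Z = iv_max (\<preceq>) n W"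
  using assms by (intro antisym_LI iv_max_in_LI iv_max_mono)

definition iv_min :: "nat \<Rightarrow> (nat \<Rightarrow> iv) \<Rightarrow> iv" where
  "iv_min n X = iv_max (\<lambda>x y. y \<preceq> x) n X"

lemma iv_min_eqI:
  "X \<in> inputs n \<Longrightarrow> j \<in> {1..n} \<Longrightarrow> \<forall>i\<in>{1..n}. X j \<preceq> X i \<Longrightarrow> iv_min n X = X j"
  unfolding iv_min_def by (rule iv_linorder.iv_max_eqI[OF dual])

lemma iv_min_aggregation:
  assumes "n \<ge> 1"
  shows "IV_aggregation (\<preceq>) n (iv_min n)"
proof -
  interpret dual: iv_linorder "\<lambda>x y. y \<preceq> x"
    by (rule dual)
  have "iv_min n X \<preceq> iv_min n Y"
    if "X \<in> inputs n" "Y \<in> inputs n" "\<forall>i\<in>{1..n}. X i \<preceq> Y i" for X Y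
    unfolding iv_min_def using that assms by (intro dual.iv_max_mono) blast+
  then show ?thesis
    unfolding IV_aggregation_def
    using assms iv0_in_LI iv1_in_LI by (simp add: iv_min_def dual.iv_max_in_LI dual.iv_max_const)
qed

lemma sorted_list_exists:
  assumes "finite S" "X ` S \<subseteq> LI"
  shows "\<exists>xs. distinct xs \<and> set xs = S \<and> sorted_wrt (\<lambda>a b. X a \<preceq> X b) xs"
  using assms
proof (induction "card S" arbitrary: S rule: less_induct)
  case less
  show ?case
  proof (cases "S = {}")
    case False
    then obtain a where a: "a \<in> S" "\<forall>b\<in>S. X a \<preceq> X b"
      using finite_has_least[of "X ` S"] less.prems by auto
    have "card (S - {a}) < card S" "finite (S - {a})" "X ` (S - {a}) \<subseteq> LI"
      using card_Diff1_less[OF less.prems(1) a(1)] less.prems by auto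
    then obtain xs where "distinct xs" "set xs = S - {a}" "sorted_wrt (\<lambda>a b. X a \<preceq> X b) xs"
      using less.hyps by blast
    then show ?thesis
      using a by (intro exI[of _ "a # xs"]) auto
  qed simp
qed

lemma sorting_perm_exists:
  assumes X: "X \<in> inputs n"
  shows "\<exists>\<sigma>. sorting_perm (\<preceq>) n X \<sigma>"
proof -
  obtain xs where xs: "distinct xs" "set xs = {1..n}" "sorted_wrt (\<lambda>a b. X a \<preceq> X b) xs"
    using sorted_list_exists[of "{1..n}" X] X by (auto simp: inputs_iff)
  have len: "length xs = n"
    using distinct_card[OF xs(1)] xs(2) by simp
  define \<sigma> where "\<sigma> i = (if i \<in> {1..n} then xs ! (i - 1) else i)" for i
  have "bij_betw (\<lambda>i. i - 1) {1..n} {..<length xs}"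
    by (rule bij_betwI[where g = Suc]) (auto simp: len)
  then have "bij_betw (\<lambda>i. xs ! (i - 1)) {1..n} {1..n}"
    using bij_betw_trans[OF _ bij_betw_nth[OF xs(1) refl xs(2)[symmetric]]]
    by (simp add: comp_def)
  then have "bij_betw \<sigma> {1..n} {1..n}"
    by (rule bij_betw_cong[THEN iffD1, rotated]) (simp add: \<sigma>_def)
  then have "\<sigma> permutes {1..n}"
    by (rule bij_imp_permutes) (auto simp: \<sigma>_def)
  moreover have "X (\<sigma> i) \<preceq> X (\<sigma> j)" if "1 \<le> i" "i \<le> j" "j \<le> n" for i j
  proof (cases "i = j")
    case True
    have "\<sigma> j \<in> {1..n}"
      using permutes_in_image[OF \<open>\<sigma> permutes {1..n}\<close>, of j] that by simp
    then show ?thesis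
      using True refl_LI inputsD[OF X] by simp
  next
    case False
    then show ?thesis
      using that xs(3) len by (simp add: \<sigma>_def sorted_wrt_iff_nth_less)
  qed
  ultimately show ?thesis
    unfolding sorting_perm_def by blast
qed

lemma iv_min_eq_first:
  assumes "X \<in> inputs n" "sorting_perm (\<preceq>) n X \<sigma>" "n \<ge> 1"
  shows "iv_min n X = X (\<sigma> 1)"
proof (rule iv_min_eqI[OF assms(1)])
  show "\<sigma> 1 \<in> {1..n}"
    using sorting_perm_in_range[OF assms(2)] assms(3) by simp
  show "\<forall>i\<in>{1..n}. X (\<sigma> 1) \<preceq> X i"
    using sorting_perm_first_least[OF assms(2)] by blast
qed

lemma sugeno_functional_aggregationI:
  assumes S_val_eq: "\<And>X \<sigma>. X \<in> inputs n \<Longrightarrow> sorting_perm (\<preceq>) n X \<sigma> \<Longrightarrow> S_val F G m n X \<sigma> = \<Phi> X"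
    and "IV_aggregation (\<preceq>) n \<Phi>"
  shows "S_well_defined (\<preceq>) F G m n \<and> IV_aggregation (\<preceq>) n (S_FG (\<preceq>) F G m n)"
proof
  show "S_well_defined (\<preceq>) F G m n"
    unfolding S_well_defined_def using S_val_eq by simp
  have "S_FG (\<preceq>) F G m n X = \<Phi> X" if "X \<in> inputs n" for X
    unfolding S_FG_def using S_val_eq[OF that someI_ex[OF sorting_perm_exists[OF that]]] .
  then show "IV_aggregation (\<preceq>) n (S_FG (\<preceq>) F G m n)"
    using IV_aggregation_cong assms(2) by blast
qed

lemma S_val_proj:
  assumes "n \<ge> 1" "X \<in> inputs n" and \<sigma>: "sorting_perm (\<preceq>) n X \<sigma>"
    and m: "IV_fuzzy_measure (\<preceq>) n m" and F_range: "\<forall>x\<in>LI. \<forall>y\<in>LI. F x y \<in> LI"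
    and G_proj: "\<forall>X\<in>inputs n. G X = f (X 1)"
  shows "S_val F G m n X \<sigma> = f (F (iv_min n X) iv1)"
proof -
  have "m (\<sigma> ` {1..n}) = iv1"
    using permutes_image[OF sorting_perm_permutes[OF \<sigma>]] fuzzy_measure_top[OF m] by simp
  then show ?thesis
    using G_proj sorted_values_in_inputs[OF assms(2) sorting_perm_permutes[OF \<sigma>] m F_range]
      iv_min_eq_first[OF assms(2) \<sigma> assms(1)]
    by (simp add: S_val_def)
qed

definition upper_indices :: "nat \<Rightarrow> (nat \<Rightarrow> iv) \<Rightarrow> nat \<Rightarrow> nat set" where
  "upper_indices n X j = {k \<in> {1..n}. X j \<preceq> X k}"

definition sugeno_upper :: "nat \<Rightarrow> (nat set \<Rightarrow> iv) \<Rightarrow> (iv \<Rightarrow> iv \<Rightarrow> iv) \<Rightarrow> (nat \<Rightarrow> iv) \<Rightarrow> iv" where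
  "sugeno_upper n m F X = iv_max (\<preceq>) n (\<lambda>j. F (X j) (m (upper_indices n X j)))"

lemma upper_indices_subset: "upper_indices n X j \<subseteq> {1..n}"
  by (auto simp: upper_indices_def)

lemma upper_values_in_inputs:
  assumes "X \<in> inputs n" "IV_fuzzy_measure (\<preceq>) n m" "\<forall>x\<in>LI. \<forall>y\<in>LI. F x y \<in> LI"
  shows "(\<lambda>j. F (X j) (m (upper_indices n X j))) \<in> inputs n"
  using assms(3) inputsD[OF assms(1)] fuzzy_measure_in_LI[OF assms(2) upper_indices_subset]
  by (simp add: inputs_iff)

lemma sorted_suffix_subset_upper_indices:
  assumes "sorting_perm (\<preceq>) n X \<sigma>" "1 \<le> i"
  shows "\<sigma> ` {i..n} \<subseteq> upper_indices n X (\<sigma> i)"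
proof
  fix k assume "k \<in> \<sigma> ` {i..n}"
  then obtain p where "p \<in> {i..n}" "k = \<sigma> p"
    by blast
  then show "k \<in> upper_indices n X (\<sigma> i)"
    using assms sorting_perm_in_range[OF assms(1), of p] sorting_perm_sorted[OF assms(1), of i p]
    by (simp add: upper_indices_def)
qed

lemma sorted_suffix_eq_upper_indices:
  assumes X: "X \<in> inputs n" and \<sigma>: "sorting_perm (\<preceq>) n X \<sigma>" and i: "i \<in> {1..n}"
    and first: "\<forall>p\<in>{1..<i}. X (\<sigma> p) \<noteq> X (\<sigma> i)"
  shows "\<sigma> ` {i..n} = upper_indices n X (\<sigma> i)"
proof
  show "\<sigma> ` {i..n} \<subseteq> upper_indices n X (\<sigma> i)"
    using sorted_suffix_subset_upper_indices[OF \<sigma>] i by simp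
  show "upper_indices n X (\<sigma> i) \<subseteq> \<sigma> ` {i..n}"
  proof
    fix k assume k: "k \<in> upper_indices n X (\<sigma> i)"
    then obtain q where q: "q \<in> {1..n}" "\<sigma> q = k"
      using sorting_perm_preimage[OF \<sigma>] upper_indices_subset by blast
    have "i \<le> q"
    proof (rule ccontr)
      assume "\<not> i \<le> q"
      then have "X (\<sigma> q) \<preceq> X (\<sigma> i)" "X (\<sigma> i) \<preceq> X (\<sigma> q)"
        using sorting_perm_sorted[OF \<sigma>, of q i] q i k by (simp_all add: upper_indices_def)
      then have "X (\<sigma> q) = X (\<sigma> i)"
        using antisym_LI inputsD[OF X] sorting_perm_in_range[OF \<sigma>] q(1) i by simp
      then show False
        using first q(1) \<open>\<not> i \<le> q\<close> by simp
    qed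
    then show "k \<in> \<sigma> ` {i..n}"
      using q by auto
  qed
qed

lemma iv_max_sorted_eq_sugeno_upper:
  assumes "n \<ge> 1" and X: "X \<in> inputs n" and \<sigma>: "sorting_perm (\<preceq>) n X \<sigma>"
    and m: "IV_fuzzy_measure (\<preceq>) n m" and F_range: "\<forall>x\<in>LI. \<forall>y\<in>LI. F x y \<in> LI"
    and F_mono2: "\<forall>x\<in>LI. mono_iv (\<preceq>) (\<lambda>y. F x y)"
  shows "iv_max (\<preceq>) n (\<lambda>i. F (X (\<sigma> i)) (m (\<sigma> ` {i..n}))) = sugeno_upper n m F X"
  unfolding sugeno_upper_def
proof (rule iv_max_eq[OF sorted_values_in_inputs[OF X sorting_perm_permutes[OF \<sigma>] m F_range]
      upper_values_in_inputs[OF X m F_range] \<open>n \<ge> 1\<close>])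
  show "\<forall>i\<in>{1..n}. \<exists>j\<in>{1..n}.
      F (X (\<sigma> i)) (m (\<sigma> ` {i..n})) \<preceq> F (X j) (m (upper_indices n X j))"
  proof
    fix i assume i: "i \<in> {1..n}"
    have sub: "\<sigma> ` {i..n} \<subseteq> upper_indices n X (\<sigma> i)"
      using sorted_suffix_subset_upper_indices[OF \<sigma>] i by simp
    have "m (\<sigma> ` {i..n}) \<preceq> m (upper_indices n X (\<sigma> i))"
      using fuzzy_measure_mono[OF m sub upper_indices_subset] .
    then have "F (X (\<sigma> i)) (m (\<sigma> ` {i..n})) \<preceq> F (X (\<sigma> i)) (m (upper_indices n X (\<sigma> i)))"
      using F_mono2 inputsD[OF X sorting_perm_in_range[OF \<sigma> i]] mono_ivD
        fuzzy_measure_in_LI[OF m] sub upper_indices_subset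
      by (metis subset_trans)
    then show "\<exists>j\<in>{1..n}. F (X (\<sigma> i)) (m (\<sigma> ` {i..n})) \<preceq> F (X j) (m (upper_indices n X j))"
      using sorting_perm_in_range[OF \<sigma> i] by blast
  qed
  show "\<forall>j\<in>{1..n}. \<exists>i\<in>{1..n}.
      F (X j) (m (upper_indices n X j)) \<preceq> F (X (\<sigma> i)) (m (\<sigma> ` {i..n}))"
  proof
    fix j assume j: "j \<in> {1..n}"
    obtain i where i: "i \<in> {1..n}" "X (\<sigma> i) = X j" "\<forall>p\<in>{1..<i}. X (\<sigma> p) \<noteq> X j"
      using sorting_perm_first_occurrence[OF \<sigma> j] .
    then have "F (X (\<sigma> i)) (m (\<sigma> ` {i..n})) = F (X j) (m (upper_indices n X j))"
      using sorted_suffix_eq_upper_indices[OF X \<sigma> i(1)] by (simp add: upper_indices_def)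
    moreover have "F (X j) (m (upper_indices n X j)) \<in> LI"
      using inputsD[OF upper_values_in_inputs[OF X m F_range] j] .
    ultimately have "F (X j) (m (upper_indices n X j)) \<preceq> F (X (\<sigma> i)) (m (\<sigma> ` {i..n}))"
      by (simp add: refl_LI)
    then show "\<exists>i\<in>{1..n}. F (X j) (m (upper_indices n X j)) \<preceq> F (X (\<sigma> i)) (m (\<sigma> ` {i..n}))"
      using i(1) by blast
  qed
qed

lemma S_val_max:
  assumes "n \<ge> 1" and X: "X \<in> inputs n" and \<sigma>: "sorting_perm (\<preceq>) n X \<sigma>"
    and m: "IV_fuzzy_measure (\<preceq>) n m" and F_range: "\<forall>x\<in>LI. \<forall>y\<in>LI. F x y \<in> LI"
    and F_mono2: "\<forall>x\<in>LI. mono_iv (\<preceq>) (\<lambda>y. F x y)"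
    and G_max: "\<forall>X\<in>inputs n. G X = f (iv_max (\<preceq>) n X)"
  shows "S_val F G m n X \<sigma> = f (sugeno_upper n m F X)"
  using G_max sorted_values_in_inputs[OF X sorting_perm_permutes[OF \<sigma>] m F_range]
    iv_max_sorted_eq_sugeno_upper[OF assms(1-6)]
  by (simp add: S_val_def)

lemma sugeno_upper_mono:
  assumes "n \<ge> 1" and X: "X \<in> inputs n" and Y: "Y \<in> inputs n" and XY: "\<forall>i\<in>{1..n}. X i \<preceq> Y i"
    and m: "IV_fuzzy_measure (\<preceq>) n m" and F_range: "\<forall>x\<in>LI. \<forall>y\<in>LI. F x y \<in> LI"
    and F_mono1: "\<forall>y\<in>LI. mono_iv (\<preceq>) (\<lambda>x. F x y)"
    and F_mono2: "\<forall>x\<in>LI. mono_iv (\<preceq>) (\<lambda>y. F x y)"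
  shows "sugeno_upper n m F X \<preceq> sugeno_upper n m F Y"
  unfolding sugeno_upper_def
proof (rule iv_max_mono[OF upper_values_in_inputs[OF X m F_range] upper_values_in_inputs[OF Y m F_range]
      \<open>n \<ge> 1\<close>], intro ballI)
  fix j assume j: "j \<in> {1..n}"
  define A where "A = upper_indices n X j"
  have "j \<in> A"
    using j refl_LI inputsD[OF X j] by (simp add: A_def upper_indices_def)
  moreover have "A \<subseteq> {1..n}"
    unfolding A_def by (rule upper_indices_subset)
  ultimately obtain k where k: "k \<in> A" "\<forall>k'\<in>A. Y k \<preceq> Y k'"
    using finite_has_least[of "Y ` A"] inputsD[OF Y] finite_subset[of A "{1..n}"] by blast
  have kn: "k \<in> {1..n}" and "X j \<preceq> X k"
    using k(1) by (simp_all add: A_def upper_indices_def)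
  then have Xj_Yk: "X j \<preceq> Y k"
    using trans_LI inputsD[OF X] inputsD[OF Y] XY j by blast
  have AB: "A \<subseteq> upper_indices n Y k"
    using k \<open>A \<subseteq> {1..n}\<close> by (auto simp: upper_indices_def)
  have mA: "m A \<in> LI" and mB: "m (upper_indices n Y k) \<in> LI"
    using fuzzy_measure_in_LI[OF m] \<open>A \<subseteq> {1..n}\<close> upper_indices_subset by blast+
  have "F (X j) (m A) \<preceq> F (Y k) (m A)"
    using mono_ivD[OF F_mono1[rule_format, OF mA] inputsD[OF X j] inputsD[OF Y kn] Xj_Yk] .
  moreover have "F (Y k) (m A) \<preceq> F (Y k) (m (upper_indices n Y k))"
    using mono_ivD[OF F_mono2[rule_format, OF inputsD[OF Y kn]] mA mB
        fuzzy_measure_mono[OF m AB upper_indices_subset]] .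
  ultimately have "F (X j) (m A) \<preceq> F (Y k) (m (upper_indices n Y k))"
    using trans_LI F_range inputsD[OF X j] inputsD[OF Y kn] mA mB by blast
  then show "\<exists>k\<in>{1..n}. F (X j) (m (upper_indices n X j)) \<preceq> F (Y k) (m (upper_indices n Y k))"
    using kn unfolding A_def by blast
qed

lemma sugeno_upper_aggregation:
  assumes "n \<ge> 1" and m: "IV_fuzzy_measure (\<preceq>) n m" and F_range: "\<forall>x\<in>LI. \<forall>y\<in>LI. F x y \<in> LI"
    and F0: "\<forall>y\<in>LI. F iv0 y = iv0" and F11: "F iv1 iv1 = iv1"
    and F_mono1: "\<forall>y\<in>LI. mono_iv (\<preceq>) (\<lambda>x. F x y)"
    and F_mono2: "\<forall>x\<in>LI. mono_iv (\<preceq>) (\<lambda>y. F x y)"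
  shows "IV_aggregation (\<preceq>) n (sugeno_upper n m F)"
  unfolding IV_aggregation_def
proof (intro conjI ballI impI)
  show "sugeno_upper n m F X \<in> LI" if "X \<in> inputs n" for X
    unfolding sugeno_upper_def
    using iv_max_in_LI[OF upper_values_in_inputs[OF that m F_range] \<open>n \<ge> 1\<close>] .
  have "F iv0 (m (upper_indices n (\<lambda>_. iv0) j)) = iv0" for j
    using F0 fuzzy_measure_in_LI[OF m upper_indices_subset] by simp
  then show "sugeno_upper n m F (\<lambda>_. iv0) = iv0"
    using iv_max_const[OF iv0_in_LI \<open>n \<ge> 1\<close>] by (simp add: sugeno_upper_def)
  have "upper_indices n (\<lambda>_. iv1) j = {1..n}" for j
    using refl_LI[OF iv1_in_LI] by (auto simp: upper_indices_def)
  then show "sugeno_upper n m F (\<lambda>_. iv1) = iv1"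
    using iv_max_const[OF iv1_in_LI \<open>n \<ge> 1\<close>] F11 fuzzy_measure_top[OF m]
    by (simp add: sugeno_upper_def)
  show "sugeno_upper n m F X \<preceq> sugeno_upper n m F Y"
    if "X \<in> inputs n" "Y \<in> inputs n" "\<forall>i\<in>{1..n}. X i \<preceq> Y i" for X Y
    using sugeno_upper_mono[OF \<open>n \<ge> 1\<close> that m F_range F_mono1 F_mono2] .
qed

lemma sugeno_proj_aggregation:
  assumes "n \<ge> 1" and m: "IV_fuzzy_measure (\<preceq>) n m"
    and F_range: "\<forall>x\<in>LI. \<forall>y\<in>LI. F x y \<in> LI"
    and F_mono: "mono_iv (\<preceq>) (\<lambda>x. F x iv1)" and "F iv0 iv1 = iv0" "F iv1 iv1 = iv1"
    and f_range: "\<forall>x\<in>LI. f x \<in> LI" and f_mono: "mono_iv (\<preceq>) f" and "f iv0 = iv0" "f iv1 = iv1"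
    and G_proj: "\<forall>X\<in>inputs n. G X = f (X 1)"
  shows "S_well_defined (\<preceq>) F G m n \<and> IV_aggregation (\<preceq>) n (S_FG (\<preceq>) F G m n)"
proof (rule sugeno_functional_aggregationI)
  show "S_val F G m n X \<sigma> = f (F (iv_min n X) iv1)"
    if "X \<in> inputs n" "sorting_perm (\<preceq>) n X \<sigma>" for X \<sigma>
    using S_val_proj[OF \<open>n \<ge> 1\<close> that m F_range G_proj] .
  have F1_range: "\<forall>x\<in>LI. F x iv1 \<in> LI"
    using F_range iv1_in_LI by simp
  show "IV_aggregation (\<preceq>) n (\<lambda>X. f (F (iv_min n X) iv1))"
    using IV_aggregation_comp[OF iv_min_aggregation[OF \<open>n \<ge> 1\<close>], of "\<lambda>x. f (F x iv1)"]
      f_range F1_range mono_iv_comp[OF f_mono F_mono F1_range] assms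
    by simp
qed

lemma sugeno_max_aggregation:
  assumes "n \<ge> 1" and m: "IV_fuzzy_measure (\<preceq>) n m"
    and F_range: "\<forall>x\<in>LI. \<forall>y\<in>LI. F x y \<in> LI"
    and F0: "\<forall>y\<in>LI. F iv0 y = iv0" and F11: "F iv1 iv1 = iv1"
    and F_mono1: "\<forall>y\<in>LI. mono_iv (\<preceq>) (\<lambda>x. F x y)" and F_mono2: "\<forall>x\<in>LI. mono_iv (\<preceq>) (\<lambda>y. F x y)"
    and f_range: "\<forall>x\<in>LI. f x \<in> LI" and f_mono: "mono_iv (\<preceq>) f" and f0: "f iv0 = iv0" and f1: "f iv1 = iv1"
    and G_max: "\<forall>X\<in>inputs n. G X = f (iv_max (\<preceq>) n X)"
  shows "S_well_defined (\<preceq>) F G m n \<and> IV_aggregation (\<preceq>) n (S_FG (\<preceq>) F G m n)"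
proof (rule sugeno_functional_aggregationI)
  show "S_val F G m n X \<sigma> = f (sugeno_upper n m F X)"
    if "X \<in> inputs n" "sorting_perm (\<preceq>) n X \<sigma>" for X \<sigma>
    using S_val_max[OF \<open>n \<ge> 1\<close> that m F_range F_mono2 G_max] .
  show "IV_aggregation (\<preceq>) n (\<lambda>X. f (sugeno_upper n m F X))"
    using IV_aggregation_comp[OF sugeno_upper_aggregation[OF \<open>n \<ge> 1\<close> m F_range F0 F11 F_mono1 F_mono2]
        f_range f_mono f0 f1] .
qed

end

theorem corollary6:
  fixes le :: "iv \<Rightarrow> iv \<Rightarrow> bool"
    and F :: "iv \<Rightarrow> iv \<Rightarrow> iv"
    and G :: "(nat \<Rightarrow> iv) \<Rightarrow> iv"
    and n :: nat
  assumes n2: "n \<ge> 2"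
    and adm: "admissible_order le"
    and F_range: "\<forall>x\<in>LI. \<forall>y\<in>LI. F x y \<in> LI"
    and G_range: "\<forall>X\<in>inputs n. G X \<in> LI"
    and cases:
      "(mono_iv le (\<lambda>x. F x iv1) \<and> F iv0 iv1 = iv0 \<and> F iv1 iv1 = iv1 \<and>
         (\<exists>f. (\<forall>x\<in>LI. f x \<in> LI) \<and> mono_iv le f \<and> f iv0 = iv0 \<and> f iv1 = iv1 \<and>
              (\<forall>X\<in>inputs n. G X = f (X 1))))
       \<or>
       ((\<forall>y\<in>LI. F iv0 y = iv0) \<and> F iv1 iv1 = iv1 \<and>
         (\<forall>y\<in>LI. mono_iv le (\<lambda>x. F x y)) \<and> (\<forall>x\<in>LI. mono_iv le (\<lambda>y. F x y)) \<and>
         (\<exists>f. (\<forall>x\<in>LI. f x \<in> LI) \<and> mono_iv le f \<and> f iv0 = iv0 \<and> f iv1 = iv1 \<and>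
              (\<forall>X\<in>inputs n. G X = f (iv_max le n X))))"
  shows "\<forall>m. IV_fuzzy_measure le n m \<longrightarrow>
           S_well_defined le F G m n \<and> IV_aggregation le n (S_FG le F G m n)"
proof (intro allI impI)
  fix m assume m: "IV_fuzzy_measure le n m"
  interpret iv_linorder le
    using adm by (rule admissible_order_imp_iv_linorder)
  have "n \<ge> 1"
    using n2 by simp
  from cases show "S_well_defined le F G m n \<and> IV_aggregation le n (S_FG le F G m n)"
    using sugeno_proj_aggregation[OF \<open>n \<ge> 1\<close> m F_range] sugeno_max_aggregation[OF \<open>n \<ge> 1\<close> m F_range]
    by (elim disjE conjE exE) simp_all
qed

end
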